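(* Let $0<h<H<\infty$ and $F\in A_h$. Then for all sufficiently small $\epsilon>0$, $$\log\mathcal A^{A_H}_\epsilon(F)\le C\frac Hh\log\frac1\epsilon,$$ where $C$ is a universal constant.
   Context: For $h>0$, $A_h$ is the real vector space of real-valued functions $F$ on $\mathbb R$, periodic with period $2\pi$, that admit an analytic continuation to the strip $\{z\in\mathbb C:|\operatorname{Im}z|\le h\}$ (bounded there), with norm $\|F\|_{A_h}$ equal to the supremum of the absolute value of this continuation on the strip. For a Banach space $\mathcal G$ of such functions and a bounded continuous $F$, the approachability is $\mathcal A^{\mathcal G}_\epsilon(F):=\inf\{\|F^*\|_{\mathcal G}:F^*\in\mathcal G,\ \sup_{x\in\mathbb R}|F(x)-F^*(x)|\le\epsilon\}$. $\log=\log_2$. *)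

theory Defs
  imports "HOL-Analysis.Analysis"
begin

definition strip :: "real \<Rightarrow> complex set" where
  "strip h = {z. \<bar>Im z\<bar> \<le> h}"

definition is_continuation :: "real \<Rightarrow> (real \<Rightarrow> real) \<Rightarrow> (complex \<Rightarrow> complex) \<Rightarrow> bool" where
  "is_continuation h F G \<longleftrightarrow>
     G holomorphic_on {z. \<bar>Im z\<bar> < h} \<and> continuous_on (strip h) G \<and>
     bounded (G ` strip h) \<and> (\<forall>x. G (complex_of_real x) = complex_of_real (F x))"

definition A_space :: "real \<Rightarrow> (real \<Rightarrow> real) set" where
  "A_space h = {F. (\<forall>x. F (x + 2 * pi) = F x) \<and> (\<exists>G. is_continuation h F G)}"

text \<open>Norm: sup of |continuation| on the closed strip (the continuation is unique;
  we take the infimum over all continuations to avoid a choice).\<close>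
definition A_norm :: "real \<Rightarrow> (real \<Rightarrow> real) \<Rightarrow> real" where
  "A_norm h F = Inf {(SUP z\<in>strip h. norm (G z)) | G. is_continuation h F G}"

definition approachability :: "real \<Rightarrow> real \<Rightarrow> (real \<Rightarrow> real) \<Rightarrow> real" where
  "approachability H \<epsilon> F =
     Inf {A_norm H Fs | Fs. Fs \<in> A_space H \<and> (\<forall>x. \<bar>F x - Fs x\<bar> \<le> \<epsilon>)}"

end

theory Submission
  imports Defs "HOL-Complex_Analysis.Complex_Analysis" "HOL-Real_Asymp.Real_Asymp"
begin

text \<open>Let \<open>G\<close> be the bounded continuation of \<open>F\<close> to \<open>\<bar>Im z\<bar> < h\<close> and \<open>a = h/2\<close>.
  Integrating \<open>G\<close> against the \<open>2\<pi>\<close>-periodic Cauchy kernel around the rectangle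
  \<open>[-\<pi>, \<pi>] \<times> [-a, a]\<close>, the vertical sides cancel by periodicity, and expanding the kernel
  into geometric series on the horizontal sides shows that the Fourier partial sum \<open>T\<^sub>N\<close> of
  degree \<open>N\<close> approximates \<open>F\<close> within \<open>O(e\<^sup>-\<^sup>a\<^sup>N)\<close>. Its coefficients are \<open>O(e\<^sup>-\<^sup>a\<^sup>\<bar>\<^sup>m\<^sup>\<bar>)\<close>,
  so \<open>\<bar>T\<^sub>N\<bar> = O(e\<^sup>N\<^sup>H)\<close> on \<open>\<bar>Im z\<bar> \<le> H\<close>. With \<open>N \<approx> log(1/\<epsilon>)/a\<close> this gives an
  \<open>\<epsilon>\<close>-approximant in \<open>A\<^sub>H\<close> of norm \<open>O(\<epsilon>\<^sup>-\<^sup>2\<^sup>H\<^sup>/\<^sup>h)\<close>.\<close>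

section \<open>Fourier approximants of functions holomorphic on a strip\<close>

lemma open_strip: "open {z::complex. \<bar>Im z\<bar> < h}"
proof -
  have "{z::complex. \<bar>Im z\<bar> < h} = {z. Im z < h} \<inter> {z. -h < Im z}" by auto
  then show ?thesis by (simp add: open_Int open_halfspace_Im_lt open_halfspace_Im_gt)
qed

lemma convex_strip: "convex {z::complex. \<bar>Im z\<bar> < h}"
proof -
  have "{z::complex. \<bar>Im z\<bar> < h} = {z. Im z < h} \<inter> {z. Im z > -h}" by auto
  then show ?thesis by (simp add: convex_Int convex_halfspace_Im_lt convex_halfspace_Im_gt)
qed

lemma holomorphic_on_strip_periodic:
  fixes p :: real and z :: complex
  assumes hol: "G holomorphic_on {z. \<bar>Im z\<bar> < h}"
    and per: "\<And>x::real. G (x + p) = G x"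
    and z: "\<bar>Im z\<bar> < h"
  shows "G (z + p) = G z"
proof -
  let ?S = "{z::complex. \<bar>Im z\<bar> < h}"
  have "(\<lambda>w. w + complex_of_real p) ` ?S \<subseteq> ?S" by auto
  then have "(\<lambda>w. G (w + p)) holomorphic_on ?S"
    using holomorphic_on_compose_gen[OF _ hol, of "\<lambda>w. w + complex_of_real p"]
    by (simp add: o_def holomorphic_intros)
  then have "(\<lambda>w. G (w + p) - G w) holomorphic_on ?S"
    by (intro holomorphic_intros hol)
  moreover have "0 islimpt (range complex_of_real)"
    unfolding islimpt_approachable
  proof (intro allI impI)
    fix e :: real assume "0 < e"
    then show "\<exists>w\<in>range complex_of_real. w \<noteq> 0 \<and> dist w 0 < e"
      by (intro bexI[of _ "of_real (e/2)"] rangeI) auto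
  qed
  moreover have "range complex_of_real \<subseteq> ?S" using z by auto
  moreover have "G (w + p) - G w = 0" if "w \<in> range complex_of_real" for w
    using that per by auto
  ultimately have "G (z + p) - G z = 0"
    using analytic_continuation[of "\<lambda>w. G (w + p) - G w" ?S "range complex_of_real" 0 z]
      open_strip convex_strip[THEN convex_connected] z by auto
  then show ?thesis by simp
qed

definition period_line :: "real \<Rightarrow> real \<Rightarrow> complex" where
  "period_line c = linepath (Complex (-pi) c) (Complex pi c)"

lemma Im_period_line: "u \<in> closed_segment (Complex (-pi) c) (Complex pi c) \<Longrightarrow> Im u = c"
  by (simp add: closed_segment_same_Im)

lemma length_period_line: "norm (Complex pi c - Complex (-pi) c) = 2 * pi"
proof -
  have "Complex pi c - Complex (-pi) c = of_real (2 * pi)" by (simp add: complex_eq_iff)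
  then show ?thesis by simp
qed

lemma contour_integrable_period_line:
  assumes "continuous_on {z. \<bar>Im z\<bar> < h} f" "\<bar>c\<bar> < h"
  shows "f contour_integrable_on period_line c"
  unfolding period_line_def
  by (rule contour_integrable_continuous_linepath, rule continuous_on_subset[OF assms(1)])
    (use assms(2) Im_period_line in auto)

text \<open>For a \<open>2\<pi>\<close>-periodic \<open>G\<close> holomorphic on the strip this is, by Cauchy's theorem, the
  \<open>m\<close>-th Fourier coefficient of \<open>G\<close> for every \<open>\<bar>c\<bar> < h\<close>; choosing the line on the side where
  \<open>e\<^sup>-\<^sup>i\<^sup>m\<^sup>u\<close> is small gives the exponential decay of the coefficients.\<close>
definition line_coeff :: "(complex \<Rightarrow> complex) \<Rightarrow> real \<Rightarrow> int \<Rightarrow> complex" where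
  "line_coeff G c m =
     contour_integral (period_line c) (\<lambda>u. G u * exp (- (\<i> * of_int m * u))) / (2 * pi)"

lemma norm_line_coeff_le:
  assumes hol: "G holomorphic_on {z. \<bar>Im z\<bar> < h}"
    and bnd: "\<And>z. \<bar>Im z\<bar> < h \<Longrightarrow> norm (G z) \<le> B" and c: "\<bar>c\<bar> < h"
  shows "norm (line_coeff G c m) \<le> B * exp (c * m)"
proof -
  have "norm (G 0) \<le> B" using bnd[of 0] c by simp
  then have B0: "0 \<le> B" by (rule order_trans[OF norm_ge_zero])
  let ?f = "\<lambda>u. G u * exp (- (\<i> * of_int m * u))"
  have "?f contour_integrable_on period_line c"
    by (intro contour_integrable_period_line[OF _ c] continuous_intros
        holomorphic_on_imp_continuous_on[OF hol])
  then have "(?f has_contour_integral contour_integral (period_line c) ?f)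
      (linepath (Complex (-pi) c) (Complex pi c))"
    unfolding period_line_def by (rule has_contour_integral_integral)
  then have "norm (contour_integral (period_line c) ?f)
      \<le> B * exp (c * m) * norm (Complex pi c - Complex (-pi) c)"
  proof (rule has_contour_integral_bound_linepath)
    show "0 \<le> B * exp (c * m)" using B0 by simp
    fix u assume "u \<in> closed_segment (Complex (-pi) c) (Complex pi c)"
    then have u: "Im u = c" by (rule Im_period_line)
    then have "norm (G u) \<le> B" using bnd c by simp
    moreover have "norm (exp (- (\<i> * of_int m * u))) = exp (c * m)" using u by simp
    ultimately show "norm (?f u) \<le> B * exp (c * m)"
      unfolding norm_mult using B0 by (intro mult_mono) auto
  qed
  then show ?thesis by (simp add: line_coeff_def norm_divide length_period_line field_simps)
qed

lemma contour_integral_period_line_coeff: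
  assumes "continuous_on {z. \<bar>Im z\<bar> < h} G" "\<bar>c\<bar> < h"
  shows "contour_integral (period_line c) (\<lambda>u. w * (G u * exp (- (\<i> * of_int k * u))))
           = w * (2 * pi * line_coeff G c k)"
proof -
  have "(\<lambda>u. G u * exp (- (\<i> * of_int k * u))) contour_integrable_on period_line c"
    using assms by (intro contour_integrable_period_line continuous_intros) auto
  then show ?thesis by (simp add: contour_integral_lmul line_coeff_def)
qed

text \<open>The Fourier partial sum over the frequencies \<open>-N \<le> m < N\<close>, each coefficient taken on the
  line \<open>Im u = \<plusminus>a\<close> where it decays like \<open>e\<^sup>-\<^sup>a\<^sup>\<bar>\<^sup>m\<^sup>\<bar>\<close>.\<close>
definition fourier_approx :: "(complex \<Rightarrow> complex) \<Rightarrow> real \<Rightarrow> nat \<Rightarrow> complex \<Rightarrow> complex" where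
  "fourier_approx G a N z =
     (\<Sum>m<N. line_coeff G (-a) (int m) * exp (\<i> * of_nat m * z)) +
     (\<Sum>m<N. line_coeff G a (- int (Suc m)) * exp (- (\<i> * of_nat (Suc m) * z)))"

lemma holomorphic_fourier_approx: "fourier_approx G a N holomorphic_on S"
  unfolding fourier_approx_def[abs_def] by (intro holomorphic_intros)

lemma exp_i_times_period:
  fixes z :: complex
  shows "exp (\<i> * of_int k * (z + 2 * pi)) = exp (\<i> * of_int k * z)"
proof -
  have "\<i> * of_int k * (z + 2 * pi) = \<i> * of_int k * z + \<i> * (of_int k * (of_real pi * 2))"
    by (simp add: algebra_simps)
  then show ?thesis by (simp only: exp_plus_2pin)
qed

lemma fourier_approx_periodic:
  fixes z :: complex
  shows "fourier_approx G a N (z + 2 * pi) = fourier_approx G a N z"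
proof -
  have "exp (\<i> * of_nat m * (z + 2 * pi)) = exp (\<i> * of_nat m * z)" for m
    using exp_i_times_period[of "int m" z] by simp
  moreover have "exp (- (\<i> * of_nat m * (z + 2 * pi))) = exp (- (\<i> * of_nat m * z))" for m
    using exp_i_times_period[of "- int m" z] by simp
  ultimately show ?thesis by (simp only: fourier_approx_def)
qed

lemma norm_fourier_approx_le:
  assumes hol: "G holomorphic_on {z. \<bar>Im z\<bar> < h}"
    and bnd: "\<And>z. \<bar>Im z\<bar> < h \<Longrightarrow> norm (G z) \<le> B"
    and a: "0 < a" "a < h" "a \<le> H" and z: "\<bar>Im z\<bar> \<le> H"
  shows "norm (fourier_approx G a N z) \<le> 2 * B / a * exp (N * H)"
proof -
  have "norm (G 0) \<le> B" using bnd[of 0] a by simp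
  then have B0: "0 \<le> B" by (rule order_trans[OF norm_ge_zero])
  have term_le: "norm (w * e) \<le> B * exp (N * (H - a))"
    if "norm w \<le> B * exp (- (a * k))" "norm e \<le> exp (k * H)" "k \<le> N" for w e :: complex and k :: nat
  proof -
    have "norm (w * e) \<le> B * exp (- (a * k)) * exp (k * H)"
      unfolding norm_mult using that B0 by (intro mult_mono) auto
    also have "\<dots> = B * exp (k * (H - a))"
      by (simp add: algebra_simps flip: exp_add)
    also have "\<dots> \<le> B * exp (N * (H - a))"
      using that a B0 by (intro mult_left_mono) (auto intro!: mult_right_mono)
    finally show ?thesis .
  qed
  have "norm (fourier_approx G a N z) \<le> (\<Sum>m<N. B * exp (N * (H - a))) + (\<Sum>m<N. B * exp (N * (H - a)))"
    unfolding fourier_approx_def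
  proof (intro order_trans[OF norm_triangle_ineq] add_mono sum_norm_le)
    fix m assume "m \<in> {..<N}"
    have "norm (exp (\<i> * of_nat m * z)) \<le> exp (m * H)"
      using z mult_left_mono[of "- Im z" H "real m"] by simp
    then show "norm (line_coeff G (-a) (int m) * exp (\<i> * of_nat m * z)) \<le> B * exp (N * (H - a))"
      using \<open>m \<in> {..<N}\<close> norm_line_coeff_le[OF hol bnd, of "-a" m] a
      by (intro term_le[where k = m]) auto
    have "norm (exp (- (\<i> * of_nat (Suc m) * z))) \<le> exp (Suc m * H)"
      using z mult_left_mono[of "Im z" H "real (Suc m)"] by simp
    then show "norm (line_coeff G a (- int (Suc m)) * exp (- (\<i> * of_nat (Suc m) * z)))
        \<le> B * exp (N * (H - a))"
      using \<open>m \<in> {..<N}\<close> norm_line_coeff_le[OF hol bnd, of a "- int (Suc m)"] a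
      by (intro term_le[where k = "Suc m"]) (auto simp: algebra_simps)
  qed
  also have "\<dots> = 2 * B * (N * exp (- (a * N))) * exp (N * H)"
    by (simp add: algebra_simps flip: exp_add)
  also have "\<dots> \<le> 2 * B * (1 / a) * exp (N * H)"
  proof -
    have "a * N \<le> exp (a * N)" using exp_ge_add_one_self[of "a * N"] by linarith
    then have "N * exp (- (a * N)) \<le> 1 / a" using a by (simp add: exp_minus field_simps)
    then show ?thesis using B0 by (intro mult_right_mono mult_left_mono) auto
  qed
  finally show ?thesis by simp
qed

section \<open>The approximation error\<close>

text \<open>The \<open>2\<pi>\<close>-periodic Cauchy kernel \<open>(cot ((u - x)/2) + \<i>)/2\<close>: its only pole in
  \<open>\<bar>Re u - x\<bar> < 2\<pi>\<close> is at \<open>u = x\<close>, with residue \<open>1\<close>.\<close>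
definition periodic_cauchy_kernel :: "complex \<Rightarrow> complex \<Rightarrow> complex" where
  "periodic_cauchy_kernel x u = \<i> / (1 - exp (\<i> * (x - u)))"

lemma periodic_cauchy_kernel_periodic:
  fixes u :: complex
  shows "periodic_cauchy_kernel x (u + 2 * pi) = periodic_cauchy_kernel x u"
proof -
  have "\<i> * (x - (u + 2 * pi)) = \<i> * (x - u) + \<i> * (of_int (-1) * (of_real pi * 2))"
    by (simp add: algebra_simps)
  then show ?thesis by (simp only: periodic_cauchy_kernel_def exp_plus_2pin)
qed

lemma periodic_cauchy_kernel_reflected:
  assumes "exp (\<i> * (u - x)) \<noteq> 1"
  shows "periodic_cauchy_kernel x u = - \<i> * exp (\<i> * (u - x)) / (1 - exp (\<i> * (u - x)))"
proof -
  define s where "s = exp (\<i> * (u - x))"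
  have "s \<noteq> 0" "s \<noteq> 1" using assms by (auto simp: s_def)
  have "exp (\<i> * (x - u)) * s = 1"
    by (simp add: s_def algebra_simps flip: exp_add)
  then have inv: "exp (\<i> * (x - u)) = 1 / s"
    using \<open>s \<noteq> 0\<close> by (simp add: eq_divide_eq)
  show ?thesis
    unfolding periodic_cauchy_kernel_def inv s_def[symmetric]
    using \<open>s \<noteq> 0\<close> \<open>s \<noteq> 1\<close> by (simp add: field_simps)
qed

lemma exp_i_diff_eq_1_imp_eq:
  fixes x :: real and u :: complex
  assumes "exp (\<i> * (x - u)) = 1" "\<bar>Re u - x\<bar> < 2 * pi"
  shows "u = x"
proof -
  obtain n :: int where n: "Im u = 0" "x - Re u = 2 * pi * n"
    using assms(1) by (auto simp: exp_eq_1)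
  then have "\<bar>2 * pi * n\<bar> < 2 * pi * 1" using assms(2) by (simp add: abs_minus_commute)
  then have "\<bar>n\<bar> < 1" by (simp only: abs_mult mult_less_cancel_left) simp
  then have "n = 0" by simp
  then show ?thesis using n by (simp add: complex_eq_iff)
qed

lemma periodic_cauchy_kernel_rectangle:
  fixes x :: real
  assumes hol: "G holomorphic_on {z. \<bar>Im z\<bar> < h}"
    and a: "0 < a" "a < h" and x: "-pi < x" "x < pi"
  shows "((\<lambda>u. G u * periodic_cauchy_kernel x u) has_contour_integral (2 * pi * \<i> * G x))
           (rectpath (Complex (-pi) (-a)) (Complex pi a))"
proof -
  define S where "S = box (Complex (x - 2 * pi) (-h)) (Complex (x + 2 * pi) h)"
  have S_iff: "u \<in> S \<longleftrightarrow> \<bar>Re u - x\<bar> < 2 * pi \<and> \<bar>Im u\<bar> < h" for u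
    by (auto simp: S_def in_box_complex_iff)
  \<comment> \<open>\<open>G \<cdot> kernel = (G \<i> / q) / (u - x)\<close> with \<open>q\<close> the difference quotient of the denominator
    at \<open>x\<close>, which is holomorphic and zero-free on \<open>S\<close>; so Cauchy's integral formula applies.\<close>
  define f where "f = (\<lambda>u. 1 - exp (\<i> * (of_real x - u)))"
  define q where "q = (\<lambda>u. if u = of_real x then deriv f x else (f u - f x) / (u - of_real x))"
  have q_hol: "q holomorphic_on S"
    unfolding q_def by (rule pole_lemma_open) (auto simp: f_def S_def intro!: holomorphic_intros)
  have "(f has_field_derivative \<i>) (at (of_real x))"
    unfolding f_def by (auto intro!: derivative_eq_intros)
  then have q_x: "q x = \<i>" by (simp add: q_def DERIV_imp_deriv)
  have q_u: "q u = (1 - exp (\<i> * (x - u))) / (u - x)" if "u \<noteq> of_real x" for u :: complex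
    using that by (simp add: q_def f_def)
  have q_nz: "q u \<noteq> 0" if "u \<in> S" for u
    using q_x q_u exp_i_diff_eq_1_imp_eq[of x u] that by (cases "u = of_real x") (auto simp: S_iff)
  have f_hol: "(\<lambda>u. G u * \<i> / q u) holomorphic_on S"
    using q_nz S_iff by (intro holomorphic_intros q_hol holomorphic_on_subset[OF hol]) auto
  have x_in: "of_real x \<in> interior S"
    using x a by (simp add: S_def interior_open[OF open_box] in_box_complex_iff)
  have image: "path_image (rectpath (Complex (-pi) (-a)) (Complex pi a)) \<subseteq> S - {of_real x}"
    using a x by (auto simp: path_image_rectpath S_iff)
  have "winding_number (rectpath (Complex (-pi) (-a)) (Complex pi a)) x = 1"
    using a x by (intro winding_number_rectpath) (simp add: in_box_complex_iff)
  then have "((\<lambda>u. G u * \<i> / q u / (u - x)) has_contour_integral (2 * pi * \<i> * G x))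
      (rectpath (Complex (-pi) (-a)) (Complex pi a))"
    using Cauchy_integral_formula_convex_simple[OF _ f_hol x_in _ image] q_x
    by (simp add: S_def convex_box mult.left_commute[of \<i>])
  then show ?thesis
  proof (rule has_contour_integral_eq)
    fix u assume "u \<in> path_image (rectpath (Complex (-pi) (-a)) (Complex pi a))"
    then have "u \<noteq> of_real x" using image by auto
    then show "G u * \<i> / q u / (u - x) = G u * periodic_cauchy_kernel x u"
      by (simp add: q_u periodic_cauchy_kernel_def)
  qed
qed

lemma contour_integral_linepath_periodic:
  assumes "\<And>u. u \<in> closed_segment a b \<Longrightarrow> f (u + p) = f u"
  shows "contour_integral (linepath a b) f = - contour_integral (linepath (b + p) (a + p)) f"
proof -
  have "contour_integral (linepath a b) f = contour_integral (linepath a b) (\<lambda>u. f (u + p))"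
    using assms by (intro contour_integral_eq) simp
  also have "\<dots> = contour_integral (linepath (a + p) (b + p)) f"
    by (simp flip: linepath_translate contour_integral_translate add: add.commute)
  also have "\<dots> = - contour_integral (linepath (b + p) (a + p)) f"
    using contour_integral_reversepath[of "linepath (b + p) (a + p)" f] by simp
  finally show ?thesis .
qed

text \<open>The vertical sides of the rectangle cancel by periodicity.\<close>
lemma periodic_cauchy_kernel_period_lines:
  fixes x :: real
  assumes hol: "G holomorphic_on {z. \<bar>Im z\<bar> < h}"
    and per: "\<And>z::complex. \<bar>Im z\<bar> < h \<Longrightarrow> G (z + 2 * pi) = G z"
    and a: "0 < a" "a < h" and x: "-pi < x" "x < pi"
  shows "contour_integral (period_line (-a)) (\<lambda>u. G u * periodic_cauchy_kernel x u)
       - contour_integral (period_line a) (\<lambda>u. G u * periodic_cauchy_kernel x u) = 2 * pi * \<i> * G x"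
proof -
  define \<Phi> where "\<Phi> = (\<lambda>u. G u * periodic_cauchy_kernel x u)"
  define a1 a2 a3 a4 where "a1 = Complex (-pi) (-a)" and "a2 = Complex pi (-a)"
    and "a3 = Complex pi a" and "a4 = Complex (-pi) a"
  have rect: "(\<Phi> has_contour_integral (2 * pi * \<i> * G x))
      (linepath a1 a2 +++ linepath a2 a3 +++ linepath a3 a4 +++ linepath a4 a1)"
    using periodic_cauchy_kernel_rectangle[OF hol a x]
    by (simp add: \<Phi>_def rectpath_def Let_def a1_def a2_def a3_def a4_def)
  then have "\<Phi> contour_integrable_on
      (linepath a1 a2 +++ linepath a2 a3 +++ linepath a3 a4 +++ linepath a4 a1)"
    by (rule has_contour_integral_integrable)
  then have "\<Phi> contour_integrable_on linepath a1 a2" "\<Phi> contour_integrable_on linepath a2 a3"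
    "\<Phi> contour_integrable_on linepath a3 a4" "\<Phi> contour_integrable_on linepath a4 a1"
    by auto
  then have sides: "contour_integral (linepath a1 a2) \<Phi> + contour_integral (linepath a2 a3) \<Phi>
      + contour_integral (linepath a3 a4) \<Phi> + contour_integral (linepath a4 a1) \<Phi> = 2 * pi * \<i> * G x"
    using contour_integral_unique[OF rect] by (simp add: add_ac)
  have "contour_integral (linepath a4 a1) \<Phi> = - contour_integral (linepath (a1 + 2 * pi) (a4 + 2 * pi)) \<Phi>"
  proof (rule contour_integral_linepath_periodic)
    fix u assume "u \<in> closed_segment a4 a1"
    then have "\<bar>Im u\<bar> < h"
      using a by (auto simp: a4_def a1_def closed_segment_same_Re closed_segment_eq_real_ivl)
    then show "\<Phi> (u + 2 * pi) = \<Phi> u"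
      using per[of u] periodic_cauchy_kernel_periodic[of x u] by (simp add: \<Phi>_def)
  qed
  moreover have "a1 + 2 * pi = a2" "a4 + 2 * pi = a3"
    by (simp_all add: a1_def a2_def a3_def a4_def complex_eq_iff)
  moreover have "contour_integral (linepath a3 a4) \<Phi> = - contour_integral (period_line a) \<Phi>"
  proof -
    have "linepath a3 a4 = reversepath (period_line a)" by (simp add: period_line_def a3_def a4_def)
    then show ?thesis
      using contour_integral_reversepath[of "period_line a" \<Phi>] by (simp add: period_line_def)
  qed
  ultimately show ?thesis
    using sides by (simp add: \<Phi>_def period_line_def a1_def a2_def)
qed

lemma contour_integral_geometric_expansion:
  assumes g: "continuous_on (closed_segment p q) g" and r: "continuous_on (closed_segment p q) r"
    and g_le: "\<And>u. u \<in> closed_segment p q \<Longrightarrow> norm (g u) \<le> B"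
    and r_le: "\<And>u. u \<in> closed_segment p q \<Longrightarrow> norm (r u) \<le> \<rho>" and "\<rho> < 1"
  shows "norm (contour_integral (linepath p q) (\<lambda>u. g u / (1 - r u))
            - (\<Sum>m<N. contour_integral (linepath p q) (\<lambda>u. g u * r u ^ m)))
         \<le> B * \<rho> ^ N / (1 - \<rho>) * norm (q - p)"
proof -
  have B: "0 \<le> B" and \<rho>: "0 \<le> \<rho>"
    using g_le[of p] r_le[of p] by (auto intro: order_trans[OF norm_ge_zero])
  have r_ne: "1 - r u \<noteq> 0" if "u \<in> closed_segment p q" for u
    using r_le[OF that] \<open>\<rho> < 1\<close> by auto
  have "((\<lambda>u. g u / (1 - r u)) has_contour_integral
      contour_integral (linepath p q) (\<lambda>u. g u / (1 - r u))) (linepath p q)"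
    using r_ne by (intro has_contour_integral_integral contour_integrable_continuous_linepath
        continuous_intros g r) auto
  moreover have "((\<lambda>u. \<Sum>m<N. g u * r u ^ m) has_contour_integral
      (\<Sum>m<N. contour_integral (linepath p q) (\<lambda>u. g u * r u ^ m))) (linepath p q)"
    by (intro has_contour_integral_sum has_contour_integral_integral
        contour_integrable_continuous_linepath continuous_intros g r) auto
  ultimately have "((\<lambda>u. g u / (1 - r u) - (\<Sum>m<N. g u * r u ^ m)) has_contour_integral
      contour_integral (linepath p q) (\<lambda>u. g u / (1 - r u))
        - (\<Sum>m<N. contour_integral (linepath p q) (\<lambda>u. g u * r u ^ m))) (linepath p q)"
    by (rule has_contour_integral_diff)
  then have "((\<lambda>u. g u * r u ^ N / (1 - r u)) has_contour_integral
      contour_integral (linepath p q) (\<lambda>u. g u / (1 - r u))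
        - (\<Sum>m<N. contour_integral (linepath p q) (\<lambda>u. g u * r u ^ m))) (linepath p q)"
  proof (rule has_contour_integral_eq)
    fix u assume "u \<in> path_image (linepath p q)"
    then have "1 - r u \<noteq> 0" "r u \<noteq> 1" using r_ne by auto
    then have "(\<Sum>m<N. g u * r u ^ m) = g u * (1 - r u ^ N) / (1 - r u)"
      by (simp add: sum_gp_strict flip: sum_distrib_left)
    then show "g u / (1 - r u) - (\<Sum>m<N. g u * r u ^ m) = g u * r u ^ N / (1 - r u)"
      by (simp add: algebra_simps flip: diff_divide_distrib)
  qed
  then show ?thesis
  proof (rule has_contour_integral_bound_linepath)
    show "0 \<le> B * \<rho> ^ N / (1 - \<rho>)" using B \<rho> \<open>\<rho> < 1\<close> by simp
    fix u assume u: "u \<in> closed_segment p q"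
    have "1 - \<rho> \<le> norm (1 - r u)"
      using norm_triangle_ineq2[of 1 "r u"] r_le[OF u] by simp
    then have "norm (g u) * norm (r u) ^ N / norm (1 - r u) \<le> B * \<rho> ^ N / (1 - \<rho>)"
      using g_le[OF u] r_le[OF u] B \<rho> \<open>\<rho> < 1\<close>
      by (intro frac_le mult_mono power_mono) auto
    then show "norm (g u * r u ^ N / (1 - r u)) \<le> B * \<rho> ^ N / (1 - \<rho>)"
      by (simp add: norm_mult norm_divide norm_power)
  qed
qed

lemma periodic_cauchy_kernel_expansion_below:
  fixes x :: real
  assumes hol: "G holomorphic_on {z. \<bar>Im z\<bar> < h}"
    and bnd: "\<And>z. \<bar>Im z\<bar> < h \<Longrightarrow> norm (G z) \<le> B" and a: "0 < a" "a < h"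
  shows "norm (contour_integral (period_line (-a)) (\<lambda>u. G u * periodic_cauchy_kernel x u)
           - 2 * pi * \<i> * (\<Sum>m<N. line_coeff G (-a) (int m) * exp (\<i> * of_nat m * x)))
         \<le> 2 * pi * B * exp (- (a * N)) / (1 - exp (-a))"
proof -
  define p q where "p = Complex (-pi) (-a)" and "q = Complex pi (-a)"
  define r where "r = (\<lambda>u. exp (\<i> * (of_real x - u)))"
  have G_cont: "continuous_on {z. \<bar>Im z\<bar> < h} G"
    by (rule holomorphic_on_imp_continuous_on[OF hol])
  have Im_u: "Im u = -a" if "u \<in> closed_segment p q" for u
    using that by (simp add: p_def q_def Im_period_line)
  have "continuous_on (closed_segment p q) G"
    using Im_u a by (intro continuous_on_subset[OF G_cont]) auto
  then have "norm (contour_integral (linepath p q) (\<lambda>u. \<i> * G u / (1 - r u))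
      - (\<Sum>m<N. contour_integral (linepath p q) (\<lambda>u. \<i> * G u * r u ^ m)))
      \<le> B * exp (-a) ^ N / (1 - exp (-a)) * norm (q - p)"
    using Im_u bnd a
    by (intro contour_integral_geometric_expansion) (auto simp: r_def norm_mult intro!: continuous_intros)
  moreover have "contour_integral (linepath p q) (\<lambda>u. \<i> * G u * r u ^ m)
      = 2 * pi * \<i> * (line_coeff G (-a) (int m) * exp (\<i> * of_nat m * x))" for m
  proof -
    have "r u ^ m = exp (\<i> * of_nat m * x) * exp (- (\<i> * of_int (int m) * u))" for u
      by (simp add: r_def algebra_simps flip: exp_of_nat_mult exp_add)
    then have "contour_integral (linepath p q) (\<lambda>u. \<i> * G u * r u ^ m)
        = contour_integral (period_line (-a))
            (\<lambda>u. \<i> * exp (\<i> * of_nat m * x) * (G u * exp (- (\<i> * of_int (int m) * u))))"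
      by (simp add: period_line_def p_def q_def mult_ac)
    also have "\<dots> = \<i> * exp (\<i> * of_nat m * x) * (2 * pi * line_coeff G (-a) (int m))"
      using G_cont a by (intro contour_integral_period_line_coeff) auto
    finally show ?thesis by (simp add: mult_ac)
  qed
  moreover have "contour_integral (linepath p q) (\<lambda>u. G u * periodic_cauchy_kernel x u)
      = contour_integral (linepath p q) (\<lambda>u. \<i> * G u / (1 - r u))"
    by (simp add: periodic_cauchy_kernel_def r_def mult.commute)
  moreover have "exp (-a) ^ N = exp (- (a * N))"
    by (simp add: mult.commute flip: exp_of_nat_mult)
  ultimately show ?thesis
    by (simp add: length_period_line period_line_def p_def q_def sum_distrib_left mult_ac)
qed

lemma periodic_cauchy_kernel_expansion_above:
  fixes x :: real
  assumes hol: "G holomorphic_on {z. \<bar>Im z\<bar> < h}"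
    and bnd: "\<And>z. \<bar>Im z\<bar> < h \<Longrightarrow> norm (G z) \<le> B" and a: "0 < a" "a < h"
  shows "norm (contour_integral (period_line a) (\<lambda>u. G u * periodic_cauchy_kernel x u)
           + 2 * pi * \<i> * (\<Sum>m<N. line_coeff G a (- int (Suc m)) * exp (- (\<i> * of_nat (Suc m) * x))))
         \<le> 2 * pi * B * exp (- (a * N)) / (1 - exp (-a))"
proof -
  define p q where "p = Complex (-pi) a" and "q = Complex pi a"
  define s where "s = (\<lambda>u. exp (\<i> * (u - of_real x)))"
  have G_cont: "continuous_on {z. \<bar>Im z\<bar> < h} G"
    by (rule holomorphic_on_imp_continuous_on[OF hol])
  have Im_u: "Im u = a" if "u \<in> closed_segment p q" for u
    using that by (simp add: p_def q_def Im_period_line)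
  have B: "0 \<le> B" using bnd[of 0] a by (auto intro: order_trans[OF norm_ge_zero])
  have "continuous_on (closed_segment p q) G"
    using Im_u a by (intro continuous_on_subset[OF G_cont]) auto
  moreover have "norm (- \<i> * G u * s u) \<le> B" if "u \<in> closed_segment p q" for u
  proof -
    have "norm (G u) * exp (-a) \<le> B * 1"
      using bnd[of u] Im_u[OF that] a B by (intro mult_mono) auto
    then show ?thesis using Im_u[OF that] by (simp add: s_def norm_mult)
  qed
  ultimately have "norm (contour_integral (linepath p q) (\<lambda>u. - \<i> * G u * s u / (1 - s u))
      - (\<Sum>m<N. contour_integral (linepath p q) (\<lambda>u. - \<i> * G u * s u * s u ^ m)))
      \<le> B * exp (-a) ^ N / (1 - exp (-a)) * norm (q - p)"
    using Im_u a
    by (intro contour_integral_geometric_expansion) (auto simp: s_def intro!: continuous_intros)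
  moreover have "contour_integral (linepath p q) (\<lambda>u. - \<i> * G u * s u * s u ^ m)
      = - 2 * pi * \<i> * (line_coeff G a (- int (Suc m)) * exp (- (\<i> * of_nat (Suc m) * x)))" for m
  proof -
    have "s u * s u ^ m
        = exp (- (\<i> * of_nat (Suc m) * x)) * exp (- (\<i> * of_int (- int (Suc m)) * u))" for u
      by (simp add: s_def algebra_simps flip: power_Suc exp_of_nat_mult exp_add)
    then have "contour_integral (linepath p q) (\<lambda>u. - \<i> * G u * s u * s u ^ m)
        = contour_integral (period_line a) (\<lambda>u. - \<i> * exp (- (\<i> * of_nat (Suc m) * x))
            * (G u * exp (- (\<i> * of_int (- int (Suc m)) * u))))"
      by (simp add: period_line_def p_def q_def mult_ac)
    also have "\<dots> = - \<i> * exp (- (\<i> * of_nat (Suc m) * x)) * (2 * pi * line_coeff G a (- int (Suc m)))"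
      using G_cont a by (intro contour_integral_period_line_coeff) auto
    finally show ?thesis by (simp add: mult_ac)
  qed
  moreover have "contour_integral (linepath p q) (\<lambda>u. G u * periodic_cauchy_kernel x u)
      = contour_integral (linepath p q) (\<lambda>u. - \<i> * G u * s u / (1 - s u))"
  proof (rule contour_integral_eq)
    fix u assume "u \<in> path_image (linepath p q)"
    then have "norm (s u) = exp (-a)" using Im_u by (simp add: s_def)
    then have "s u \<noteq> 1" using a by auto
    then show "G u * periodic_cauchy_kernel x u = - \<i> * G u * s u / (1 - s u)"
      by (simp add: periodic_cauchy_kernel_reflected s_def)
  qed
  moreover have "exp (-a) ^ N = exp (- (a * N))"
    by (simp add: mult.commute flip: exp_of_nat_mult)
  ultimately show ?thesis
    by (simp add: length_period_line period_line_def p_def q_def sum_distrib_left sum_negf mult_ac)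
qed

lemma norm_fourier_approx_error_on_period:
  fixes x :: real
  assumes hol: "G holomorphic_on {z. \<bar>Im z\<bar> < h}"
    and per: "\<And>z::complex. \<bar>Im z\<bar> < h \<Longrightarrow> G (z + 2 * pi) = G z"
    and bnd: "\<And>z. \<bar>Im z\<bar> < h \<Longrightarrow> norm (G z) \<le> B"
    and a: "0 < a" "a < h" and x: "-pi < x" "x < pi"
  shows "norm (G x - fourier_approx G a N x) \<le> 2 * B * exp (- (a * N)) / (1 - exp (-a))"
proof -
  define \<Phi> where "\<Phi> = (\<lambda>u. G u * periodic_cauchy_kernel x u)"
  define E where "E = 2 * pi * B * exp (- (a * N)) / (1 - exp (-a))"
  define S_below where "S_below = (\<Sum>m<N. line_coeff G (-a) (int m) * exp (\<i> * of_nat m * x))"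
  define S_above where
    "S_above = (\<Sum>m<N. line_coeff G a (- int (Suc m)) * exp (- (\<i> * of_nat (Suc m) * x)))"
  have "2 * pi * norm (G x - fourier_approx G a N x) = norm (2 * pi * \<i> * (G x - fourier_approx G a N x))"
    by (simp add: norm_mult)
  also have "2 * pi * \<i> * (G x - fourier_approx G a N x)
      = (contour_integral (period_line (-a)) \<Phi> - 2 * pi * \<i> * S_below)
        - (contour_integral (period_line a) \<Phi> + 2 * pi * \<i> * S_above)"
    using periodic_cauchy_kernel_period_lines[OF hol per a x]
    by (simp add: \<Phi>_def S_below_def S_above_def fourier_approx_def algebra_simps)
  also have "norm \<dots> \<le> norm (contour_integral (period_line (-a)) \<Phi> - 2 * pi * \<i> * S_below)
      + norm (contour_integral (period_line a) \<Phi> + 2 * pi * \<i> * S_above)"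
    by (rule norm_triangle_ineq4)
  also have "\<dots> \<le> E + E"
    using periodic_cauchy_kernel_expansion_below[OF hol bnd a, of x N]
      periodic_cauchy_kernel_expansion_above[OF hol bnd a, of x N]
    unfolding \<Phi>_def S_below_def S_above_def E_def by (intro add_mono)
  also have "E + E = 2 * pi * (2 * B * exp (- (a * N)) / (1 - exp (-a)))"
    by (simp add: E_def)
  finally show ?thesis by (rule mult_left_le_imp_le) simp
qed

lemma norm_le_of_periodic_on_open_period:
  fixes g :: "real \<Rightarrow> 'a::real_normed_vector"
  assumes cont: "continuous_on UNIV g" and per: "\<And>x. g (x + p) = g x" and "0 < p"
    and le: "\<And>x. t < x \<Longrightarrow> x < t + p \<Longrightarrow> norm (g x) \<le> c"
  shows "norm (g x) \<le> c"
proof -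
  interpret periodic_fun_simple g p by standard (rule per)
  have "closure {t<..<t + p} \<subseteq> {x. norm (g x) \<le> c}"
    using le by (intro closure_minimal) (auto intro!: closed_Collect_le continuous_intros cont)
  then have le_closed: "norm (g y) \<le> c" if "t \<le> y" "y \<le> t + p" for y
    using that \<open>0 < p\<close> by auto
  define k where "k = \<lfloor>(x - t) / p\<rfloor>"
  have "of_int k \<le> (x - t) / p" "(x - t) / p < of_int k + 1"
    unfolding k_def by linarith+
  then have "t \<le> x + of_int (- k) * p" "x + of_int (- k) * p \<le> t + p"
    using \<open>0 < p\<close> by (simp_all add: field_simps)
  then show ?thesis
    using le_closed[of "x + of_int (- k) * p"] plus_of_int[of x "- k"] by simp
qed

lemma norm_fourier_approx_error:
  fixes x :: real
  assumes hol: "G holomorphic_on {z. \<bar>Im z\<bar> < h}"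
    and per: "\<And>x::real. G (x + 2 * pi) = G x"
    and bnd: "\<And>z. \<bar>Im z\<bar> < h \<Longrightarrow> norm (G z) \<le> B" and a: "0 < a" "a < h"
  shows "norm (G x - fourier_approx G a N x) \<le> 2 * B * exp (- (a * N)) / (1 - exp (-a))"
proof -
  define g where "g = (\<lambda>y::real. G y - fourier_approx G a N y)"
  have "continuous_on UNIV (\<lambda>y::real. G y)"
    using a by (intro continuous_on_compose2[OF holomorphic_on_imp_continuous_on[OF hol]]
        continuous_intros) auto
  moreover have "continuous_on UNIV (\<lambda>y::real. fourier_approx G a N y)"
    by (intro continuous_on_compose2[OF holomorphic_on_imp_continuous_on[OF holomorphic_fourier_approx]]
        continuous_intros) auto
  ultimately have "continuous_on UNIV g"
    unfolding g_def by (intro continuous_intros)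
  moreover have "g (y + 2 * pi) = g y" for y
    using per[of y] fourier_approx_periodic[of G a N y] by (simp add: g_def)
  moreover have "norm (g y) \<le> 2 * B * exp (- (a * N)) / (1 - exp (-a))" if "-pi < y" "y < pi" for y
    unfolding g_def
    using norm_fourier_approx_error_on_period[OF hol holomorphic_on_strip_periodic[OF hol per] bnd a that]
    by simp
  ultimately show ?thesis
    using norm_le_of_periodic_on_open_period[of g "2 * pi" "-pi"] by (simp add: g_def)
qed

section \<open>Approximation in the spaces \<open>A\<^sub>h\<close>\<close>

lemma SUP_strip_norm_nonneg:
  assumes "0 \<le> H" "is_continuation H f G"
  shows "0 \<le> (SUP z\<in>strip H. norm (G z))"
proof -
  have "bdd_above ((\<lambda>z. norm (G z)) ` strip H)"
    using assms(2) unfolding is_continuation_def bounded_iff bdd_above_def by fastforce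
  moreover have "0 \<in> strip H" using assms(1) by (simp add: strip_def)
  ultimately show ?thesis by (rule cSUP_upper2) simp
qed

lemma A_norm_nonneg:
  assumes "0 \<le> H" "f \<in> A_space H"
  shows "0 \<le> A_norm H f"
  unfolding A_norm_def
proof (rule cInf_greatest)
  show "{(SUP z\<in>strip H. norm (G z)) |G. is_continuation H f G} \<noteq> {}"
    using assms(2) by (auto simp: A_space_def)
qed (use SUP_strip_norm_nonneg[OF assms(1)] in blast)

lemma A_norm_le:
  assumes "0 \<le> H" "is_continuation H f G" "\<And>z. z \<in> strip H \<Longrightarrow> norm (G z) \<le> K"
  shows "A_norm H f \<le> K"
proof -
  have "A_norm H f \<le> (SUP z\<in>strip H. norm (G z))"
    unfolding A_norm_def
  proof (rule cInf_lower)
    show "bdd_below {(SUP z\<in>strip H. norm (G z)) |G. is_continuation H f G}"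
      using SUP_strip_norm_nonneg[OF assms(1)] by (auto intro: bdd_belowI[of _ 0])
  qed (use assms(2) in blast)
  also have "\<dots> \<le> K"
    using assms(1,3) by (intro cSUP_least) (auto simp: strip_def intro!: exI[of _ 0])
  finally show ?thesis .
qed

lemma approachability_bounds:
  assumes "0 \<le> H" "Fs \<in> A_space H" "\<forall>x. \<bar>F x - Fs x\<bar> \<le> \<epsilon>"
  shows "0 \<le> approachability H \<epsilon> F" "approachability H \<epsilon> F \<le> A_norm H Fs"
proof -
  let ?X = "{A_norm H Fs |Fs. Fs \<in> A_space H \<and> (\<forall>x. \<bar>F x - Fs x\<bar> \<le> \<epsilon>)}"
  have mem: "A_norm H Fs \<in> ?X" using assms by blast
  have lb: "0 \<le> y" if "y \<in> ?X" for y using that A_norm_nonneg[OF assms(1)] by blast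
  show "0 \<le> approachability H \<epsilon> F"
    unfolding approachability_def using mem lb by (intro cInf_greatest) auto
  show "approachability H \<epsilon> F \<le> A_norm H Fs"
    unfolding approachability_def using lb by (intro cInf_lower[OF mem] bdd_belowI[of _ 0]) auto
qed

text \<open>The witness is the real part of the Fourier approximant \<open>T\<close>, continued to the entire
  function \<open>(T z + cnj (T (cnj z)))/2\<close>.\<close>
lemma A_space_fourier_approximant:
  fixes N :: nat and a H :: real
  assumes hol: "G holomorphic_on {z. \<bar>Im z\<bar> < h}"
    and per: "\<And>x::real. G (x + 2 * pi) = G x"
    and bnd: "\<And>z. \<bar>Im z\<bar> < h \<Longrightarrow> norm (G z) \<le> B"
    and real: "\<And>x. G (of_real x) = of_real (F x)"
    and a: "0 < a" "a < h" "a \<le> H"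
  shows "\<exists>Fs\<in>A_space H. (\<forall>x. \<bar>F x - Fs x\<bar> \<le> 2 * B * exp (- (a * N)) / (1 - exp (-a)))
           \<and> A_norm H Fs \<le> 2 * B / a * exp (N * H)"
proof (intro bexI conjI allI)
  define T where "T = fourier_approx G a N"
  define Fs where "Fs = (\<lambda>x. Re (T (of_real x)))"
  define P where "P = (\<lambda>z. (T z + cnj (T (cnj z))) / 2)"
  have P_hol: "P holomorphic_on UNIV"
    using holomorphic_on_compose_cnj_cnj[OF holomorphic_fourier_approx, of UNIV G a N]
    unfolding P_def T_def by (intro holomorphic_intros holomorphic_fourier_approx) (auto simp: o_def)
  have P_le: "norm (P z) \<le> 2 * B / a * exp (N * H)" if "z \<in> strip H" for z
  proof -
    have "\<bar>Im z\<bar> \<le> H" "\<bar>Im (cnj z)\<bar> \<le> H" using that by (auto simp: strip_def)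
    then have "norm (T z) + norm (T (cnj z)) \<le> 2 * B / a * exp (N * H) + 2 * B / a * exp (N * H)"
      unfolding T_def by (intro add_mono norm_fourier_approx_le[OF hol bnd a])
    then show ?thesis
      unfolding P_def using norm_triangle_ineq[of "T z" "cnj (T (cnj z))"] by (simp add: norm_divide)
  qed
  have "is_continuation H Fs P"
    unfolding is_continuation_def
  proof (intro conjI allI)
    show "P holomorphic_on {z. \<bar>Im z\<bar> < H}" "continuous_on (strip H) P"
      using P_hol holomorphic_on_subset holomorphic_on_imp_continuous_on by blast+
    show "bounded (P ` strip H)" using P_le unfolding bounded_iff by blast
    show "P (of_real x) = of_real (Fs x)" for x
      by (simp add: P_def Fs_def complex_add_cnj)
  qed
  moreover have "Fs (x + 2 * pi) = Fs x" for x
    using fourier_approx_periodic[of G a N "of_real x"] by (simp add: Fs_def T_def)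
  ultimately show "Fs \<in> A_space H" by (auto simp: A_space_def)
  show "A_norm H Fs \<le> 2 * B / a * exp (N * H)"
    using a by (intro A_norm_le[OF _ \<open>is_continuation H Fs P\<close> P_le]) auto
  fix x
  have "\<bar>F x - Fs x\<bar> = \<bar>Re (G x - T x)\<bar>" by (simp add: Fs_def real)
  also have "\<dots> \<le> norm (G x - fourier_approx G a N x)" unfolding T_def by (rule abs_Re_le_cmod)
  also have "\<dots> \<le> 2 * B * exp (- (a * N)) / (1 - exp (-a))"
    using norm_fourier_approx_error[OF hol per bnd a(1,2)] .
  finally show "\<bar>F x - Fs x\<bar> \<le> 2 * B * exp (- (a * N)) / (1 - exp (-a))" .
qed

lemma A_space_bounded_continuation:
  assumes "F \<in> A_space h"
  obtains G B where "G holomorphic_on {z. \<bar>Im z\<bar> < h}" "\<And>x::real. G (x + 2 * pi) = G x"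
    "\<And>z. \<bar>Im z\<bar> < h \<Longrightarrow> norm (G z) \<le> B" "\<And>x. G (of_real x) = of_real (F x)" "0 < B"
proof -
  obtain G where per: "\<And>x. F (x + 2 * pi) = F x" and cont: "is_continuation h F G"
    using assms unfolding A_space_def by blast
  then obtain M where M: "\<And>z. z \<in> strip h \<Longrightarrow> norm (G z) \<le> M"
    unfolding is_continuation_def bounded_iff by blast
  show ?thesis
  proof
    show "G holomorphic_on {z. \<bar>Im z\<bar> < h}" "\<And>x. G (of_real x) = of_real (F x)"
      using cont by (auto simp: is_continuation_def)
    then show "G (x + 2 * pi) = G x" for x :: real
      using per by (metis of_real_add of_real_mult of_real_numeral)
    show "norm (G z) \<le> max 1 M" if "\<bar>Im z\<bar> < h" for z
      using M[of z] that by (simp add: strip_def)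
  qed simp
qed

lemma exp_nat_ceiling_ln_bounds:
  fixes a c \<epsilon> H :: real
  assumes a: "0 < a" and \<epsilon>: "0 < \<epsilon>" "\<epsilon> < c" and H: "0 \<le> H"
  defines "N \<equiv> nat \<lceil>ln (c / \<epsilon>) / a\<rceil>"
  shows "c * exp (- (a * N)) \<le> \<epsilon>"
    and "exp (N * H) \<le> exp H * c powr (H / a) * (1 / \<epsilon>) powr (H / a)"
proof -
  have "0 < ln (c / \<epsilon>) / a" using a \<epsilon> by simp
  then have N_ge: "ln (c / \<epsilon>) / a \<le> N" and N_le: "N \<le> ln (c / \<epsilon>) / a + 1"
    unfolding N_def by linarith+
  from N_ge have "ln (c / \<epsilon>) \<le> a * N" using a by (simp add: field_simps)
  then have "c * exp (- (a * N)) \<le> c * exp (- ln (c / \<epsilon>))"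
    using \<epsilon> by simp
  also have "\<dots> = \<epsilon>" using \<epsilon> by (simp add: exp_minus)
  finally show "c * exp (- (a * N)) \<le> \<epsilon>" .
  from N_le have "N * H \<le> (ln (c / \<epsilon>) / a + 1) * H" using H by (intro mult_right_mono) auto
  then have "exp (N * H) \<le> exp ((H / a) * ln (c / \<epsilon>) + H)"
    by (simp add: algebra_simps)
  also have "\<dots> = exp H * (c / \<epsilon>) powr (H / a)"
    using \<epsilon> by (simp add: powr_def exp_add mult.commute)
  also have "(c / \<epsilon>) powr (H / a) = c powr (H / a) * (1 / \<epsilon>) powr (H / a)"
    using \<epsilon> by (simp add: powr_divide)
  finally show "exp (N * H) \<le> exp H * c powr (H / a) * (1 / \<epsilon>) powr (H / a)"
    by (simp add: mult_ac)
qed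

lemma A_space_eventually_approximable:
  assumes hH: "0 < h" "h < H" and F: "F \<in> A_space h"
  obtains K where "0 < K"
    "\<forall>\<^sub>F \<epsilon> in at_right 0. \<exists>Fs\<in>A_space H.
       (\<forall>x. \<bar>F x - Fs x\<bar> \<le> \<epsilon>) \<and> A_norm H Fs \<le> K * (1 / \<epsilon>) powr (2 * H / h)"
proof -
  obtain G B where hol: "G holomorphic_on {z. \<bar>Im z\<bar> < h}" and per: "\<And>x::real. G (x + 2 * pi) = G x"
    and bnd: "\<And>z. \<bar>Im z\<bar> < h \<Longrightarrow> norm (G z) \<le> B" and real: "\<And>x. G (of_real x) = of_real (F x)"
    and "0 < B"
    using A_space_bounded_continuation[OF F] by blast
  define a where "a = h / 2"
  have a: "0 < a" "a < h" "a \<le> H" and "2 * H / h = H / a" using hH by (auto simp: a_def)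
  define c where "c = 2 * B / (1 - exp (-a))"
  have "0 < c" using \<open>0 < B\<close> a by (simp add: c_def)
  define K where "K = 2 * B / a * exp H * c powr (H / a)"
  have "0 < K" using \<open>0 < B\<close> \<open>0 < c\<close> a by (simp add: K_def)
  moreover have "\<forall>\<^sub>F \<epsilon> in at_right 0. \<exists>Fs\<in>A_space H.
      (\<forall>x. \<bar>F x - Fs x\<bar> \<le> \<epsilon>) \<and> A_norm H Fs \<le> K * (1 / \<epsilon>) powr (2 * H / h)"
    using eventually_at_right_less[of 0] order_tendstoD(2)[OF tendsto_ident_at \<open>0 < c\<close>]
  proof eventually_elim
    case (elim \<epsilon>)
    define N where "N = nat \<lceil>ln (c / \<epsilon>) / a\<rceil>"
    obtain Fs where Fs: "Fs \<in> A_space H" and err: "\<forall>x. \<bar>F x - Fs x\<bar> \<le> c * exp (- (a * N))"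
      and norm_Fs: "A_norm H Fs \<le> 2 * B / a * exp (N * H)"
      using A_space_fourier_approximant[OF hol per bnd real a] by (auto simp: c_def)
    have "c * exp (- (a * N)) \<le> \<epsilon>"
      and "exp (N * H) \<le> exp H * c powr (H / a) * (1 / \<epsilon>) powr (H / a)"
      using exp_nat_ceiling_ln_bounds[of a \<epsilon> c H] a elim unfolding N_def by auto
    moreover have "2 * B / a * exp (N * H) \<le> K * (1 / \<epsilon>) powr (2 * H / h)"
    proof -
      have "2 * B / a * exp (N * H) \<le> 2 * B / a * (exp H * c powr (H / a) * (1 / \<epsilon>) powr (H / a))"
        using \<open>0 < B\<close> a calculation(2) by (intro mult_left_mono) auto
      also have "\<dots> = K * (1 / \<epsilon>) powr (2 * H / h)"
        by (simp add: K_def \<open>2 * H / h = H / a\<close>)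
      finally show ?thesis .
    qed
    ultimately show ?case
      using Fs err norm_Fs by (auto intro: order_trans)
  qed
  ultimately show ?thesis by (rule that)
qed

lemma log_le_of_le_mult_powr:
  fixes X K y r s :: real
  assumes X: "0 \<le> X" "X \<le> K * y powr r" and "0 < K" "1 \<le> y"
    and K: "log 2 K \<le> s * log 2 y" and "0 \<le> r + s"
  shows "log 2 X \<le> (r + s) * log 2 y"
proof (cases "X = 0")
  case False
  then have "log 2 X \<le> log 2 (K * y powr r)"
    using X by simp
  also have "\<dots> = log 2 K + r * log 2 y"
    using \<open>0 < K\<close> \<open>1 \<le> y\<close> by (simp add: log_mult log_powr)
  finally show ?thesis using K by (simp add: algebra_simps)
qed (use assms in \<open>simp add: log_def\<close>)

theorem lemma2:
  shows "\<exists>C::real. \<forall>h H F. 0 < h \<and> h < H \<and> F \<in> A_space h \<longrightarrow>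
     (\<forall>\<^sub>F \<epsilon> in at_right 0.
        (\<exists>Fs\<in>A_space H. \<forall>x. \<bar>F x - Fs x\<bar> \<le> \<epsilon>) \<and>
        log 2 (approachability H \<epsilon> F) \<le> C * (H / h) * log 2 (1 / \<epsilon>))"
proof (intro exI[of _ 3] allI impI)
  \<comment> \<open>\<open>3 = 2 + 1\<close>: the exponent of \<open>1/\<epsilon>\<close> in the norm bound, plus a slack absorbing \<open>log K\<close>.\<close>
  fix h H :: real and F assume "0 < h \<and> h < H \<and> F \<in> A_space h"
  then have hH: "0 < h" "h < H" and "F \<in> A_space h" by auto
  then obtain K where "0 < K" and approx: "\<forall>\<^sub>F \<epsilon> in at_right 0. \<exists>Fs\<in>A_space H.
      (\<forall>x. \<bar>F x - Fs x\<bar> \<le> \<epsilon>) \<and> A_norm H Fs \<le> K * (1 / \<epsilon>) powr (2 * H / h)"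
    by (rule A_space_eventually_approximable)
  have log_K: "\<forall>\<^sub>F \<epsilon> in at_right 0. log 2 K \<le> r * log 2 (1 / \<epsilon>)" if "0 < r" for r :: real
    using that by real_asymp
  have "\<forall>\<^sub>F \<epsilon> in at_right 0. log 2 K \<le> H / h * log 2 (1 / \<epsilon>)"
    using hH by (intro log_K) simp
  moreover have "\<forall>\<^sub>F \<epsilon> in at_right (0::real). 0 < \<epsilon> \<and> \<epsilon> < 1"
    by (intro eventually_conj eventually_at_right_less) real_asymp
  ultimately show "\<forall>\<^sub>F \<epsilon> in at_right 0. (\<exists>Fs\<in>A_space H. \<forall>x. \<bar>F x - Fs x\<bar> \<le> \<epsilon>) \<and>
      log 2 (approachability H \<epsilon> F) \<le> 3 * (H / h) * log 2 (1 / \<epsilon>)"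
    using approx
  proof eventually_elim
    case (elim \<epsilon>)
    then obtain Fs where Fs: "Fs \<in> A_space H" "\<forall>x. \<bar>F x - Fs x\<bar> \<le> \<epsilon>"
      and "A_norm H Fs \<le> K * (1 / \<epsilon>) powr (2 * H / h)" by blast
    then have "0 \<le> approachability H \<epsilon> F" "approachability H \<epsilon> F \<le> K * (1 / \<epsilon>) powr (2 * H / h)"
      using approachability_bounds[of H Fs F \<epsilon>] hH by auto
    then have "log 2 (approachability H \<epsilon> F) \<le> (2 * H / h + H / h) * log 2 (1 / \<epsilon>)"
      using \<open>0 < K\<close> elim hH by (intro log_le_of_le_mult_powr) auto
    then show ?case using Fs by (auto simp: algebra_simps)
  qed
qed

end
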